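(* For every integer $n\ge 2$, $|PF_{n,n-2}|=n^n-n^{n-2}$.
   Context: For $n\in\mathbb{N}$ let $[n]=\{1,\dots,n\}$ and $PP_n=[n]^n$. For an integer $k\ge 0$, the $k$-Naples parking rule: there are $n$ spots numbered $1,\dots,n$ west to east, initially empty; cars $c_1,\dots,c_n$ arrive in order, car $c_i$ preferring spot $a_i$. If spot $a_i$ is empty, $c_i$ parks there. Otherwise $c_i$ checks spots $a_i-1,\dots,a_i-k$ in this order (skipping those $<1$) and parks in the first empty one; if all are occupied, it drives east and parks in the first empty spot numbered greater than $a_i$, failing to park if none exists. $PF_{n,k}$ is the set of preferences in $PP_n$ for which all cars park. *)

theory Defs
  imports Main "HOL-Library.FuncSet"
begin

text \<open>The k-Naples parking rule. The state is the set of occupied spots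
(or None once some car has failed to park).\<close>

definition naples_step :: "nat \<Rightarrow> nat \<Rightarrow> nat set option \<Rightarrow> nat \<Rightarrow> nat set option" where
  "naples_step n k st a =
     (case st of None \<Rightarrow> None
      | Some Occ \<Rightarrow>
        (if a \<notin> Occ then Some (insert a Occ)
         else if (\<exists>j. 1 \<le> j \<and> j \<le> k \<and> j < a \<and> a - j \<notin> Occ)
           then Some (insert (a - (LEAST j. 1 \<le> j \<and> j \<le> k \<and> j < a \<and> a - j \<notin> Occ)) Occ)
         else if (\<exists>s. a < s \<and> s \<le> n \<and> s \<notin> Occ)
           then Some (insert (LEAST s. a < s \<and> s \<le> n \<and> s \<notin> Occ) Occ)
         else None))"

fun naples_run :: "nat \<Rightarrow> nat \<Rightarrow> (nat \<Rightarrow> nat) \<Rightarrow> nat \<Rightarrow> nat set option" where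
  "naples_run n k alpha 0 = Some {}"
| "naples_run n k alpha (Suc m) = naples_step n k (naples_run n k alpha m) (alpha (Suc m))"

text \<open>PP_n = [n]^n, preferences as extensional functions on the car index set {1..n}.\<close>
definition PP :: "nat \<Rightarrow> (nat \<Rightarrow> nat) set" where
  "PP n = ({1..n} \<rightarrow>\<^sub>E {1..n})"

definition PF :: "nat \<Rightarrow> nat \<Rightarrow> (nat \<Rightarrow> nat) set" where
  "PF n k = {alpha \<in> PP n. naples_run n k alpha n \<noteq> None}"

end

theory Submission
  imports Defs
begin

text \<open>For \<open>k = n - 2\<close> a car that finds its spot taken searches west far enough to reach spot 1
unless it prefers spot \<open>n\<close>; hence the first \<open>n - 1\<close> cars always park, and the last car fails
exactly when it prefers \<open>n\<close> while spots \<open>2..n\<close> are taken. Compare with circular parking on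
\<open>\<int>/n\<close>, where a car takes the first free spot cyclically west of its preference: as long as
spot 1 is free, the Naples occupied set is the circular one shifted up by one, and spot 1 is free
after \<open>n - 1\<close> cars iff circular spot 0 is. Circular parking commutes with rotations, so
each of the \<open>n\<close> spots is the one left free by the same number of the \<open>n ^ (n - 1)\<close>
preference lists of the first \<open>n - 1\<close> cars, namely \<open>n ^ (n - 2)\<close>; extended by \<open>\<alpha> n = n\<close>,
those leaving spot 0 free are exactly the failing preferences.\<close>

text \<open>Spots of the circular lot are \<open>0..<n\<close>; the car takes the first free spot among
\<open>a, a - 1, a - 2, \<dots>\<close> (mod \<open>n\<close>). Naples spot \<open>s\<close> corresponds to circular spot \<open>s - 1\<close>.\<close>

definition circular_step :: "nat \<Rightarrow> nat set \<Rightarrow> nat \<Rightarrow> nat set" where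
  "circular_step n C a = insert ((a + n - (LEAST d. d < n \<and> (a + n - d) mod n \<notin> C)) mod n) C"

fun circular_run :: "nat \<Rightarrow> (nat \<Rightarrow> nat) \<Rightarrow> nat \<Rightarrow> nat set" where
  "circular_run n \<beta> 0 = {}"
| "circular_run n \<beta> (Suc m) = circular_step n (circular_run n \<beta> m) (\<beta> (Suc m))"

lemma circular_run_subset: "0 < n \<Longrightarrow> circular_run n \<beta> m \<subseteq> {..<n}"
  by (induction m) (auto simp: circular_step_def)

lemma circular_run_cong:
  "(\<And>i. i \<in> {1..m} \<Longrightarrow> \<beta> i = \<gamma> i) \<Longrightarrow> circular_run n \<beta> m = circular_run n \<gamma> m"
  by (induction m) auto

lemma circular_step_LEAST:
  assumes "C \<subseteq> {..<n}" "card C < n" "a < n"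
  defines "d \<equiv> LEAST d. d < n \<and> (a + n - d) mod n \<notin> C"
  shows "d < n" "(a + n - d) mod n \<notin> C"
proof -
  have "C \<noteq> {..<n}"
    using assms(2) by auto
  then obtain y where y: "y < n" "y \<notin> C"
    using assms(1) by auto
  have "\<exists>d. d < n \<and> (a + n - d) mod n \<notin> C"
  proof (cases "y \<le> a")
    case True
    then show ?thesis using y assms by (intro exI[of _ "a - y"]) auto
  next
    case False
    then show ?thesis using y assms by (intro exI[of _ "a + n - y"]) auto
  qed
  from LeastI_ex[OF this] show "d < n" "(a + n - d) mod n \<notin> C"
    unfolding d_def by blast+
qed

lemma card_circular_step:
  assumes "C \<subseteq> {..<n}" "card C < n" "a < n"
  shows "card (circular_step n C a) = Suc (card C)"
  using circular_step_LEAST[OF assms] finite_subset[OF assms(1)]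
  by (simp add: circular_step_def)

lemma card_circular_run:
  assumes "\<forall>i\<in>{1..m}. \<beta> i < n" "m \<le> n"
  shows "card (circular_run n \<beta> m) = m"
  using assms
proof (induction m)
  case (Suc m)
  then show ?case
    using card_circular_step[of "circular_run n \<beta> m" n] circular_run_subset[of n \<beta> m] by auto
qed simp

lemma inj_on_rotate: "inj_on (\<lambda>x. (x + c) mod n) {..<n::nat}"
proof -
  have le: "y = z" if "y < n" "z < n" "y \<le> z" "(y + c) mod n = (z + c) mod n" for y z :: nat
  proof -
    have "n dvd (z + c) - (y + c)"
      using that mod_eq_dvd_iff_nat[of "y + c" "z + c" n] by simp
    then have "n dvd z - y" by simp
    moreover have "z - y < n" using that by simp
    ultimately have "z - y = 0"
      using dvd_imp_le not_le by blast
    then show "y = z" using that by simp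
  qed
  show ?thesis
  proof (rule inj_onI)
    fix y z assume "y \<in> {..<n}" "z \<in> {..<n}" "(y + c) mod n = (z + c) mod n"
    then show "y = z"
      using le[of y z] le[of z y] by (cases "y \<le> z") auto
  qed
qed

lemma mod_rotate_backward:
  assumes "d \<le> n"
  shows "((a + c) mod n + n - d) mod n = ((a + n - d) mod n + c) mod (n::nat)"
proof -
  have "((a + c) mod n + n - d) mod n = ((a + c) mod n + (n - d)) mod n"
    using assms by simp
  also have "\<dots> = (a + c + (n - d)) mod n"
    by (simp add: mod_add_left_eq)
  also have "\<dots> = (a + n - d + c) mod n"
    using assms by (simp add: algebra_simps)
  also have "\<dots> = ((a + n - d) mod n + c) mod n"
    by (simp add: mod_add_left_eq)
  finally show ?thesis .
qed

lemma circular_step_rotate: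
  assumes "C \<subseteq> {..<n}" "card C < n" "a < n"
  shows "circular_step n ((\<lambda>x. (x + c) mod n) ` C) ((a + c) mod n)
    = (\<lambda>x. (x + c) mod n) ` circular_step n C a"
proof -
  define r where "r x = (x + c) mod n" for x
  have free_iff: "r y \<notin> r ` C \<longleftrightarrow> y \<notin> C" if "y < n" for y
    using that assms(1) inj_on_rotate[of c n] unfolding r_def inj_on_def by blast
  have backward: "(r a + n - d) mod n = r ((a + n - d) mod n)" if "d < n" for d
    using that mod_rotate_backward[of d n a c] unfolding r_def by simp
  have "(d < n \<and> (r a + n - d) mod n \<notin> r ` C) \<longleftrightarrow> (d < n \<and> (a + n - d) mod n \<notin> C)" for d
    using backward free_iff assms(3) by (cases "d < n") auto
  then have "(LEAST d. d < n \<and> (r a + n - d) mod n \<notin> r ` C)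
      = (LEAST d. d < n \<and> (a + n - d) mod n \<notin> C)"
    by simp
  then show ?thesis
    using backward[OF circular_step_LEAST(1)[OF assms]] unfolding r_def
    by (simp add: circular_step_def)
qed

lemma circular_run_rotate:
  assumes "\<forall>i\<in>{1..m}. \<beta> i < n" "m \<le> n"
  shows "circular_run n (\<lambda>i. (\<beta> i + c) mod n) m = (\<lambda>x. (x + c) mod n) ` circular_run n \<beta> m"
  using assms
proof (induction m)
  case (Suc m)
  then show ?case
    using circular_step_rotate[of "circular_run n \<beta> m" n "\<beta> (Suc m)" c]
      card_circular_run[of m \<beta> n] circular_run_subset[of n \<beta> m] by auto
qed simp

definition prefs_leaving_free :: "nat \<Rightarrow> nat \<Rightarrow> nat \<Rightarrow> (nat \<Rightarrow> nat) set" where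
  "prefs_leaving_free n m j = {\<beta> \<in> {1..m} \<rightarrow>\<^sub>E {..<n}. j \<notin> circular_run n \<beta> m}"

lemma card_prefs_leaving_free_le:
  assumes "i < n" "j < n" "m \<le> n"
  shows "card (prefs_leaving_free n m i) \<le> card (prefs_leaving_free n m j)"
proof -
  define c where "c = (j + n - i) mod n"
  define r where "r x = (x + c) mod n" for x
  define \<rho> where "\<rho> \<beta> = restrict (\<lambda>t. r (\<beta> t)) {1..m}" for \<beta>
  have "r i = j"
    using assms(1,2) unfolding r_def c_def by (simp add: mod_add_right_eq)
  have inj_r: "inj_on r {..<n}"
    unfolding r_def by (rule inj_on_rotate)
  have run_\<rho>: "circular_run n (\<rho> \<beta>) m = r ` circular_run n \<beta> m" if "\<beta> \<in> {1..m} \<rightarrow>\<^sub>E {..<n}" for \<beta>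
  proof -
    have "circular_run n (\<rho> \<beta>) m = circular_run n (\<lambda>t. (\<beta> t + c) mod n) m"
      by (rule circular_run_cong) (simp add: \<rho>_def r_def)
    also have "\<dots> = r ` circular_run n \<beta> m"
      using circular_run_rotate[of m \<beta> n c] that assms(3) unfolding r_def by auto
    finally show ?thesis .
  qed
  have "inj_on \<rho> (prefs_leaving_free n m i)"
  proof (rule inj_onI)
    fix \<beta> \<gamma> assume \<beta>\<gamma>: "\<beta> \<in> prefs_leaving_free n m i" "\<gamma> \<in> prefs_leaving_free n m i"
      and "\<rho> \<beta> = \<rho> \<gamma>"
    then have r_eq: "r (\<beta> t) = r (\<gamma> t)" if "t \<in> {1..m}" for t
      using that unfolding \<rho>_def by (metis restrict_apply')
    have PiE: "\<beta> \<in> {1..m} \<rightarrow>\<^sub>E {..<n}" "\<gamma> \<in> {1..m} \<rightarrow>\<^sub>E {..<n}"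
      using \<beta>\<gamma> unfolding prefs_leaving_free_def by auto
    show "\<beta> = \<gamma>"
    proof (rule PiE_ext[OF PiE])
      fix t assume t: "t \<in> {1..m}"
      with PiE have "\<beta> t \<in> {..<n}" "\<gamma> t \<in> {..<n}" by blast+
      with r_eq[OF t] show "\<beta> t = \<gamma> t"
        by (rule inj_onD[OF inj_r])
    qed
  qed
  moreover have "\<rho> ` prefs_leaving_free n m i \<subseteq> prefs_leaving_free n m j"
  proof safe
    fix \<beta> assume "\<beta> \<in> prefs_leaving_free n m i"
    then have "\<beta> \<in> {1..m} \<rightarrow>\<^sub>E {..<n}" "i \<notin> circular_run n \<beta> m"
      unfolding prefs_leaving_free_def by auto
    moreover have "circular_run n \<beta> m \<subseteq> {..<n}"
      using circular_run_subset assms by auto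
    ultimately have "j \<notin> circular_run n (\<rho> \<beta>) m"
      using run_\<rho> \<open>r i = j\<close> inj_onD[OF inj_r, of i] assms(1) by auto
    moreover have "\<rho> \<beta> \<in> {1..m} \<rightarrow>\<^sub>E {..<n}"
      using assms(2) unfolding \<rho>_def r_def by auto
    ultimately show "\<rho> \<beta> \<in> prefs_leaving_free n m j"
      unfolding prefs_leaving_free_def by blast
  qed
  moreover have "finite (prefs_leaving_free n m j)"
    unfolding prefs_leaving_free_def by (simp add: finite_PiE)
  ultimately show ?thesis
    by (rule card_inj_on_le)
qed

lemma sum_card_prefs_leaving_free:
  assumes "0 < n" "m \<le> n"
  shows "(\<Sum>j<n. card (prefs_leaving_free n m j)) = (n - m) * n ^ m"
proof -
  let ?P = "{1..m} \<rightarrow>\<^sub>E {..<n}"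
  have free_spots: "(\<Sum>j<n. if j \<notin> circular_run n \<beta> m then 1 else 0) = n - m" if "\<beta> \<in> ?P" for \<beta>
  proof -
    have "\<forall>i\<in>{1..m}. \<beta> i < n"
      using that by auto
    then have "card (circular_run n \<beta> m) = m"
      using card_circular_run assms(2) by blast
    moreover have "circular_run n \<beta> m \<subseteq> {..<n}"
      using circular_run_subset assms(1) by blast
    ultimately have "card ({..<n} - circular_run n \<beta> m) = n - m"
      by (simp add: card_Diff_subset finite_subset)
    moreover have "{..<n} - circular_run n \<beta> m = {j \<in> {..<n}. j \<notin> circular_run n \<beta> m}"
      by auto
    ultimately show ?thesis
      by (simp add: sum.inter_filter[symmetric])
  qed
  have "(\<Sum>j<n. card (prefs_leaving_free n m j))
      = (\<Sum>j<n. \<Sum>\<beta>\<in>?P. if j \<notin> circular_run n \<beta> m then 1 else 0)"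
    unfolding prefs_leaving_free_def by (simp add: sum.inter_filter[symmetric] finite_PiE)
  also have "\<dots> = (\<Sum>\<beta>\<in>?P. \<Sum>j<n. if j \<notin> circular_run n \<beta> m then 1 else 0)"
    by (rule sum.swap)
  also have "\<dots> = (\<Sum>\<beta>\<in>?P. n - m)"
    using free_spots by simp
  also have "\<dots> = (n - m) * n ^ m"
    by (simp add: card_PiE)
  finally show ?thesis .
qed

lemma card_prefs_leaving_free:
  assumes "j < n" "m \<le> n"
  shows "n * card (prefs_leaving_free n m j) = (n - m) * n ^ m"
proof -
  have "card (prefs_leaving_free n m i) = card (prefs_leaving_free n m j)" if "i < n" for i
    using card_prefs_leaving_free_le that assms by (meson le_antisym)
  then have "(\<Sum>i<n. card (prefs_leaving_free n m i)) = n * card (prefs_leaving_free n m j)"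
    by simp
  with sum_card_prefs_leaving_free[of n m] assms show ?thesis
    by simp
qed

lemma naples_step_blocked:
  fixes n a :: nat
  assumes "a \<in> {1..n}" "a \<in> L"
    and no_west: "\<not> (\<exists>j. 1 \<le> j \<and> j \<le> n - 2 \<and> j < a \<and> a - j \<notin> L)"
    and no_east: "\<not> (\<exists>s. a < s \<and> s \<le> n \<and> s \<notin> L)"
  shows "{2..n} \<subseteq> L" "a < n \<Longrightarrow> {1..n} \<subseteq> L"
proof -
  have west: "y \<in> L" if "1 \<le> y" "y < a" "a - y \<le> n - 2" for y
  proof -
    have "1 \<le> a - y" "a - y < a" "a - (a - y) = y"
      using that by auto
    then show ?thesis
      using no_west that(3) by metis
  qed
  have east: "y \<in> L" if "a < y" "y \<le> n" for y
    using no_east that by auto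
  have "y \<in> L" if "y \<in> {1..n}" "2 \<le> y \<or> a < n" for y
    using west[of y] east[of y] that assms(1,2) by (cases y a rule: linorder_cases) auto
  then show "{2..n} \<subseteq> L" "a < n \<Longrightarrow> {1..n} \<subseteq> L"
    by auto
qed

lemma naples_step_parks:
  fixes n a :: nat
  assumes "L \<subseteq> {1..n}" "card L \<le> n - 2" "a \<in> {1..n}" "2 \<le> n"
  shows "\<exists>x \<in> {1..n} - L. naples_step n (n - 2) (Some L) a = Some (insert x L)"
proof (cases "a \<in> L")
  case False
  then show ?thesis using assms(3) by (auto simp: naples_step_def)
next
  case occupied: True
  show ?thesis
  proof (cases "\<exists>j. 1 \<le> j \<and> j \<le> n - 2 \<and> j < a \<and> a - j \<notin> L")
    case west: True
    define j where "j = (LEAST j. 1 \<le> j \<and> j \<le> n - 2 \<and> j < a \<and> a - j \<notin> L)"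
    have "1 \<le> j \<and> j \<le> n - 2 \<and> j < a \<and> a - j \<notin> L"
      unfolding j_def by (rule LeastI_ex[OF west])
    moreover have "naples_step n (n - 2) (Some L) a = Some (insert (a - j) L)"
      using occupied west by (simp add: naples_step_def j_def)
    moreover have "a - j \<in> {1..n}"
      using \<open>1 \<le> j \<and> j \<le> n - 2 \<and> j < a \<and> a - j \<notin> L\<close> assms(3) by auto
    ultimately show ?thesis
      by blast
  next
    case no_west: False
    show ?thesis
    proof (cases "\<exists>s. a < s \<and> s \<le> n \<and> s \<notin> L")
      case east: True
      define s where "s = (LEAST s. a < s \<and> s \<le> n \<and> s \<notin> L)"
      have "a < s \<and> s \<le> n \<and> s \<notin> L"
        unfolding s_def by (rule LeastI_ex[OF east])
      moreover have "naples_step n (n - 2) (Some L) a = Some (insert s L)"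
        using occupied no_west east by (auto simp: naples_step_def s_def)
      ultimately show ?thesis
        using assms(3) by auto
    next
      case False
      have "card {2..n} \<le> card L"
        using naples_step_blocked(1)[OF assms(3) occupied no_west False] assms(1)
        by (meson card_mono finite_atLeastAtMost finite_subset)
      then show ?thesis
        using assms(2,4) by simp
    qed
  qed
qed

lemma naples_step_None_iff:
  fixes n a :: nat
  assumes L: "L \<subseteq> {1..n}" "card L = n - 1" and "a \<in> {1..n}" "2 \<le> n"
  shows "naples_step n (n - 2) (Some L) a = None \<longleftrightarrow> a = n \<and> 1 \<notin> L"
proof
  assume "naples_step n (n - 2) (Some L) a = None"
  then have occupied: "a \<in> L"
    and no_west: "\<not> (\<exists>j. 1 \<le> j \<and> j \<le> n - 2 \<and> j < a \<and> a - j \<notin> L)"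
    and no_east: "\<not> (\<exists>s. a < s \<and> s \<le> n \<and> s \<notin> L)"
    by (auto simp: naples_step_def split: if_splits)
  have not_full: "\<not> {1..n} \<subseteq> L"
  proof
    assume "{1..n} \<subseteq> L"
    then have "card {1..n} \<le> card L"
      using L(1) by (meson card_mono finite_atLeastAtMost finite_subset)
    then show False
      using assms by simp
  qed
  have "{1..n} = insert 1 {2..n}"
    using assms by auto
  then show "a = n \<and> 1 \<notin> L"
    using naples_step_blocked[OF assms(3) occupied no_west no_east] not_full assms(3) by force
next
  assume last: "a = n \<and> 1 \<notin> L"
  have "L \<subseteq> {2..n}"
  proof
    fix x assume "x \<in> L"
    with L(1) last show "x \<in> {2..n}"
      by (cases "x = 1") auto
  qed
  moreover have "card L = card {2..n}"
    using L(2) by simp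
  ultimately have "L = {2..n}"
    by (simp add: card_subset_eq)
  then show "naples_step n (n - 2) (Some L) a = None"
    using last assms(4) by (auto simp: naples_step_def)
qed

lemma naples_step_Suc_image:
  fixes n a :: nat
  assumes C: "C \<subseteq> {..<n}" "0 \<notin> C" "card C \<le> n - 2" and a: "a \<in> {1..n}"
  shows "naples_step n (n - 2) (Some (Suc ` C)) a = Some (Suc ` circular_step n C (a - 1))"
proof -
  define b where "b = a - 1"
  have a_b: "a = Suc b" and "b < n"
    using a unfolding b_def by auto
  have mod_eq: "(b + n - d) mod n = b - d" if "d \<le> b" for d
  proof -
    have "(b + n - d) mod n = (b - d + n) mod n"
      by (simp only: add_diff_assoc2[OF that])
    also have "\<dots> = b - d"
      using \<open>b < n\<close> by (simp only: mod_add_self2) (simp add: less_imp_diff_less)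
    finally show ?thesis .
  qed
  define P where "P d \<longleftrightarrow> d < n \<and> (b + n - d) mod n \<notin> C" for d
  define d where "d = Least P"
  have "P b"
    unfolding P_def using \<open>b < n\<close> C(2) by simp
  then have "d \<le> b" "P d"
    unfolding d_def by (auto intro: Least_le LeastI)
  then have free: "b - d \<notin> C"
    unfolding P_def by (simp add: mod_eq)
  have taken: "b - e \<in> C" if "e < d" for e
  proof -
    have "\<not> P e"
      using not_less_Least[of e P] that unfolding d_def by blast
    moreover have "e < n" "e \<le> b"
      using that \<open>d \<le> b\<close> \<open>b < n\<close> by linarith+
    ultimately show ?thesis
      unfolding P_def using mod_eq[of e] by simp
  qed
  have circ: "circular_step n C b = insert (b - d) C"
    unfolding circular_step_def P_def[symmetric] d_def[symmetric] using \<open>d \<le> b\<close> by (simp add: mod_eq)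
  show ?thesis
  proof (cases "d = 0")
    case True
    then have "a \<notin> Suc ` C"
      using free a_b by auto
    then show ?thesis
      using True circ a_b by (simp add: naples_step_def b_def[symmetric])
  next
    case False
    have "d \<le> n - 2"
    proof (rule ccontr)
      assume "\<not> d \<le> n - 2"
      then have "d = n - 1" "b = n - 1"
        using \<open>d \<le> b\<close> \<open>b < n\<close> by auto
      have "{1..<n} \<subseteq> C"
      proof
        fix y assume "y \<in> {1..<n}"
        then have "b - (b - y) \<in> C"
          using taken[of "b - y"] \<open>d = n - 1\<close> \<open>b = n - 1\<close> by auto
        then show "y \<in> C"
          using \<open>y \<in> {1..<n}\<close> \<open>b = n - 1\<close> by auto
      qed
      then have "card {1..<n} \<le> card C"
        using C(1) by (meson card_mono finite_lessThan finite_subset)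
      then show False
        using C(3) \<open>b < n\<close> \<open>d = n - 1\<close> False by simp
    qed
    define Q where "Q j \<longleftrightarrow> 1 \<le> j \<and> j \<le> n - 2 \<and> j < a \<and> a - j \<notin> Suc ` C" for j
    have "Q d"
      unfolding Q_def using False \<open>d \<le> n - 2\<close> \<open>d \<le> b\<close> a_b free by (auto simp: Suc_diff_le)
    moreover have "d \<le> j" if "Q j" for j
    proof (rule ccontr)
      assume "\<not> d \<le> j"
      then have "b - j \<in> C" using taken by simp
      with that show False
        unfolding Q_def a_b by (auto simp: Suc_diff_le)
    qed
    ultimately have "Least Q = d"
      by (intro Least_equality)
    moreover have "a \<in> Suc ` C"
      using taken[of 0] False a_b by simp
    moreover have "\<exists>j. Q j"
      using \<open>Q d\<close> by blast
    ultimately have "naples_step n (n - 2) (Some (Suc ` C)) a = Some (insert (a - d) (Suc ` C))"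
      unfolding naples_step_def Q_def by simp
    then show ?thesis
      using circ \<open>d \<le> b\<close> unfolding a_b by (simp add: Suc_diff_le)
  qed
qed

lemma naples_run_first_cars:
  fixes n m :: nat and \<alpha> :: "nat \<Rightarrow> nat"
  defines "C \<equiv> circular_run n (\<lambda>i. \<alpha> i - 1) m"
  assumes "2 \<le> n" "m \<le> n - 1" "\<forall>i\<in>{1..m}. \<alpha> i \<in> {1..n}"
  shows "\<exists>L. naples_run n (n - 2) \<alpha> m = Some L \<and> L \<subseteq> {1..n} \<and> card L = m \<and>
    (0 \<notin> C \<longrightarrow> L = Suc ` C) \<and> (0 \<in> C \<longrightarrow> 1 \<in> L)"
  using assms(3,4) unfolding C_def
proof (induction m)
  case (Suc m)
  define C where "C = circular_run n (\<lambda>i. \<alpha> i - 1) m"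
  define a where "a = \<alpha> (Suc m)"
  obtain L where L: "naples_run n (n - 2) \<alpha> m = Some L" "L \<subseteq> {1..n}" "card L = m"
      "0 \<notin> C \<Longrightarrow> L = Suc ` C" "0 \<in> C \<Longrightarrow> 1 \<in> L"
    using Suc unfolding C_def by auto
  have "a \<in> {1..n}" "card L \<le> n - 2"
    using Suc.prems L(3) unfolding a_def by auto
  have run_Suc: "naples_run n (n - 2) \<alpha> (Suc m) = naples_step n (n - 2) (Some L) a"
    and circ_Suc: "circular_run n (\<lambda>i. \<alpha> i - 1) (Suc m) = circular_step n C (a - 1)"
    using L(1) unfolding a_def C_def by simp_all
  show ?case
  proof (cases "0 \<in> C")
    case True
    then have "0 \<in> circular_run n (\<lambda>i. \<alpha> i - 1) (Suc m)"
      unfolding circ_Suc circular_step_def by simp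
    moreover obtain x where "x \<in> {1..n} - L" "naples_step n (n - 2) (Some L) a = Some (insert x L)"
      using naples_step_parks[OF L(2) \<open>card L \<le> n - 2\<close> \<open>a \<in> {1..n}\<close> assms(2)] by blast
    moreover have "finite L"
      using L(2) finite_subset by blast
    ultimately show ?thesis
      using run_Suc L True by auto
  next
    case False
    have C_sub: "C \<subseteq> {..<n}"
      using circular_run_subset assms(2) unfolding C_def by simp
    have "card C = m"
      using L(3) L(4)[OF False] by (simp add: card_image)
    then have "card (circular_step n C (a - 1)) = Suc m"
      using card_circular_step[OF C_sub] Suc.prems \<open>a \<in> {1..n}\<close> by auto
    moreover have "circular_step n C (a - 1) \<subseteq> {..<n}"
      using C_sub \<open>a \<in> {1..n}\<close> assms(2) by (auto simp: circular_step_def)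
    moreover have "naples_step n (n - 2) (Some L) a = Some (Suc ` circular_step n C (a - 1))"
      using naples_step_Suc_image[OF C_sub False _ \<open>a \<in> {1..n}\<close>] L(4)[OF False]
        \<open>card C = m\<close> \<open>card L \<le> n - 2\<close> L(3) by simp
    ultimately show ?thesis
      using run_Suc circ_Suc by (auto simp: card_image)
  qed
qed simp

lemma naples_run_None_iff:
  assumes "2 \<le> n" "\<alpha> \<in> PP n"
  shows "naples_run n (n - 2) \<alpha> n = None \<longleftrightarrow>
    \<alpha> n = n \<and> 0 \<notin> circular_run n (\<lambda>i. \<alpha> i - 1) (n - 1)"
proof -
  have \<alpha>: "\<forall>i\<in>{1..n}. \<alpha> i \<in> {1..n}"
    using assms(2) by (auto simp: PP_def)
  then obtain L where L: "naples_run n (n - 2) \<alpha> (n - 1) = Some L" "L \<subseteq> {1..n}" "card L = n - 1"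
    "1 \<notin> L \<longleftrightarrow> 0 \<notin> circular_run n (\<lambda>i. \<alpha> i - 1) (n - 1)"
    using naples_run_first_cars[OF assms(1) order_refl, of \<alpha>] by fastforce
  have "n = Suc (n - 1)"
    using assms(1) by simp
  then have "naples_run n (n - 2) \<alpha> n = naples_step n (n - 2) (Some L) (\<alpha> n)"
    using L(1) by (metis naples_run.simps(2))
  moreover have "\<alpha> n \<in> {1..n}"
    using \<alpha> assms(1) by simp
  ultimately show ?thesis
    using naples_step_None_iff[OF L(2,3)] L(4) assms(1) by simp
qed

definition naples_failures :: "nat \<Rightarrow> (nat \<Rightarrow> nat) set" where
  "naples_failures n = {\<alpha> \<in> PP n. \<alpha> n = n \<and> 0 \<notin> circular_run n (\<lambda>i. \<alpha> i - 1) (n - 1)}"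

lemma PF_eq_PP_minus_naples_failures:
  assumes "2 \<le> n"
  shows "PF n (n - 2) = PP n - naples_failures n"
proof -
  have "\<alpha> \<in> PF n (n - 2) \<longleftrightarrow> \<alpha> \<in> PP n - naples_failures n" for \<alpha>
    using naples_run_None_iff[OF assms, of \<alpha>] unfolding PF_def naples_failures_def by auto
  then show ?thesis
    by blast
qed

lemma card_naples_failures:
  assumes "2 \<le> n"
  shows "card (naples_failures n) = n ^ (n - 2)"
proof -
  define F where "F = naples_failures n"
  define f where "f \<alpha> = restrict (\<lambda>i. \<alpha> i - 1) {1..n - 1}" for \<alpha> :: "nat \<Rightarrow> nat"
  define g where "g \<beta> = (\<lambda>i. if i \<in> {1..n - 1} then \<beta> i + 1 else if i = n then n else undefined)"
    for \<beta> :: "nat \<Rightarrow> nat"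
  have run_f: "circular_run n (f \<alpha>) (n - 1) = circular_run n (\<lambda>i. \<alpha> i - 1) (n - 1)" for \<alpha>
    by (rule circular_run_cong) (simp add: f_def)
  have run_g: "circular_run n (\<lambda>i. g \<beta> i - 1) (n - 1) = circular_run n \<beta> (n - 1)" for \<beta>
    by (rule circular_run_cong) (simp add: g_def)
  have split: "{1..n} = insert n {1..n - 1}" "n \<notin> {1..n - 1}"
    using assms by auto
  have "bij_betw f F (prefs_leaving_free n (n - 1) 0)"
  proof (rule bij_betw_byWitness[where f' = g])
    show "\<forall>\<alpha>\<in>F. g (f \<alpha>) = \<alpha>"
      unfolding F_def naples_failures_def PP_def f_def g_def using split
      by (force simp: PiE_iff extensional_def)
    show "\<forall>\<beta>\<in>prefs_leaving_free n (n - 1) 0. f (g \<beta>) = \<beta>"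
      unfolding prefs_leaving_free_def f_def g_def
      by (force simp: PiE_iff extensional_def)
    show "f ` F \<subseteq> prefs_leaving_free n (n - 1) 0"
      unfolding F_def naples_failures_def PP_def prefs_leaving_free_def using run_f split
      by (force simp: f_def PiE_iff)
    show "g ` prefs_leaving_free n (n - 1) 0 \<subseteq> F"
      unfolding F_def naples_failures_def PP_def prefs_leaving_free_def using run_g split assms
      by (force simp: g_def PiE_iff extensional_def)
  qed
  then have "card F = card (prefs_leaving_free n (n - 1) 0)"
    by (rule bij_betw_same_card)
  moreover have "n - 1 = Suc (n - 2)"
    using assms by simp
  then have "n * card (prefs_leaving_free n (n - 1) 0) = n * n ^ (n - 2)"
    using card_prefs_leaving_free[of 0 n "n - 1"] assms by simp
  ultimately show ?thesis
    using assms unfolding F_def by simp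
qed

theorem corollary2p4:
  fixes n :: nat
  assumes "n \<ge> 2"
  shows "int (card (PF n (n - 2))) = int n ^ n - int n ^ (n - 2)"
proof -
  have "finite (PP n)" "card (PP n) = n ^ n"
    unfolding PP_def by (simp_all add: finite_PiE card_PiE)
  moreover have "naples_failures n \<subseteq> PP n"
    unfolding naples_failures_def by blast
  moreover have "n ^ (n - 2) \<le> n ^ n"
    using assms by (simp add: power_increasing)
  ultimately show ?thesis
    using PF_eq_PP_minus_naples_failures[OF assms] card_naples_failures[OF assms]
    by (simp add: card_Diff_subset finite_subset of_nat_diff)
qed

end
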